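(* Let $\xi$ be a Lévy process in $\mathbb R^d$ with characteristic exponent $\Psi$ and lower Blumenthal-Getoor index $\beta''$, and let $p\in(0,1)$ with $p>1/\beta''$. For $n\ge1$ let $\hat S^{(n)}$ be the step reinforced random walk with memory parameter $p$ built from the skeleton $S^{(n)}=(\xi(k/n))_{k\ge0}$. Then for every $\theta\in\mathbb R^d\setminus\{0\}$, $\lim_{n\to\infty}\mathbb E\big[\exp\{i\theta\cdot\hat S^{(n)}(n)\}\big]=0$; consequently the sequence $(\hat S^{(n)}(n))_{n\ge1}$ does not converge in distribution.
   Context: The characteristic exponent $\Psi$ of $\xi$ is defined by $\mathbb E[e^{i\theta\cdot\xi(t)}]=e^{-t\Psi(\theta)}$. The lower Blumenthal-Getoor index is $\beta''=\sup\{\alpha\ge0:\lim_{|\theta|\to\infty}|\theta|^{-\alpha}\mathrm{Re}\,\Psi(\theta)=\infty\}$. Step reinforced random walk with memory parameter $p$ built from i.i.d. steps $X_1,X_2,\dots$ (here $X_j=\xi(j/n)-\xi((j-1)/n)$): let $(\varepsilon_i)_{i\ge2}$ be i.i.d. Bernoulli($p$) independent of the steps; set $\hat X_1=X_1$ and for $i\ge2$, $\hat X_i=X_i$ if $\varepsilon_i=0$, while if $\varepsilon_i=1$, $\hat X_i$ is a uniform random sample (independent of everything else) from $\hat X_1,\dots,\hat X_{i-1}$; then $\hat S(k)=\hat X_1+\dots+\hat X_k$. *)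

theory Defs
  imports "HOL-Probability.Probability"
begin

definition levy_process :: "'a measure \<Rightarrow> (real \<Rightarrow> 'a \<Rightarrow> 'd::euclidean_space) \<Rightarrow> bool" where
  "levy_process M \<xi> \<longleftrightarrow>
     prob_space M \<and>
     (\<forall>t\<ge>0. \<xi> t \<in> borel_measurable M) \<and>
     (\<forall>x\<in>space M. \<xi> 0 x = 0) \<and>
     (\<forall>x\<in>space M. \<forall>t\<ge>0. continuous (at_right t) (\<lambda>s. \<xi> s x)) \<and>
     (\<forall>x\<in>space M. \<forall>t>0. \<exists>l. ((\<lambda>s. \<xi> s x) \<longlongrightarrow> l) (at_left t)) \<and>
     (\<forall>(ts::nat \<Rightarrow> real) k. 0 \<le> ts 0 \<longrightarrow> (\<forall>i<k. ts i < ts (Suc i)) \<longrightarrow>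
        prob_space.indep_vars M (\<lambda>_. borel) (\<lambda>i x. \<xi> (ts (Suc i)) x - \<xi> (ts i) x) {..<k}) \<and>
     (\<forall>s t. 0 \<le> s \<longrightarrow> 0 \<le> t \<longrightarrow>
        distr M borel (\<lambda>x. \<xi> (s + t) x - \<xi> s x) = distr M borel (\<xi> t))"

definition char_exponent :: "'a measure \<Rightarrow> (real \<Rightarrow> 'a \<Rightarrow> 'd::euclidean_space) \<Rightarrow> ('d \<Rightarrow> complex) \<Rightarrow> bool" where
  "char_exponent M \<xi> \<Psi> \<longleftrightarrow>
     (\<forall>t\<ge>0. \<forall>\<theta>. (LINT x|M. cis (\<theta> \<bullet> \<xi> t x)) = exp (- (complex_of_real t * \<Psi> \<theta>)))"

text \<open>Lower Blumenthal-Getoor index (as an extended real; sup of the empty set is -\<infinity>).\<close>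
definition lower_BG_index :: "('d::euclidean_space \<Rightarrow> complex) \<Rightarrow> ereal" where
  "lower_BG_index \<Psi> = Sup {ereal \<alpha> | \<alpha>. \<alpha> \<ge> 0 \<and>
      filterlim (\<lambda>\<theta>. norm \<theta> powr (- \<alpha>) * Re (\<Psi> \<theta>)) at_top at_infinity}"

definition skeleton_steps :: "(real \<Rightarrow> 'a \<Rightarrow> 'd::euclidean_space) \<Rightarrow> nat \<Rightarrow> nat \<Rightarrow> 'a \<Rightarrow> 'd" where
  "skeleton_steps \<xi> n j x = \<xi> (real j / real n) x - \<xi> (real (j - 1) / real n) x"

text \<open>Reinforced steps (indices from 1): hat X_1 = X_1; for i \<ge> 2, hat X_i = X_i if
  the coin e_i is false, otherwise hat X_{U_i}, where U_i is the uniformly chosen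
  index in {1..i-1} (values outside this range have probability 0 and are
  given an arbitrary value).\<close>
fun hatX :: "(nat \<Rightarrow> 'a \<Rightarrow> 'b) \<Rightarrow> (nat \<Rightarrow> 'a \<Rightarrow> bool) \<Rightarrow> (nat \<Rightarrow> 'a \<Rightarrow> nat) \<Rightarrow> 'a \<Rightarrow> nat \<Rightarrow> 'b" where
  "hatX X e U x i =
     (if i \<le> 1 \<or> \<not> e i x then X i x
      else if 1 \<le> U i x \<and> U i x < i then hatX X e U x (U i x) else X i x)"

definition srw :: "(nat \<Rightarrow> 'a \<Rightarrow> 'b::comm_monoid_add) \<Rightarrow> (nat \<Rightarrow> 'a \<Rightarrow> bool) \<Rightarrow> (nat \<Rightarrow> 'a \<Rightarrow> nat) \<Rightarrow> nat \<Rightarrow> 'a \<Rightarrow> 'b" where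
  "srw X e U k x = (\<Sum>i=1..k. hatX X e U x i)"

datatype srw_idx = Step nat | Coin nat | Pick nat

definition srw_randomness :: "'a measure \<Rightarrow> real \<Rightarrow> (nat \<Rightarrow> 'a \<Rightarrow> 'd::euclidean_space) \<Rightarrow>
    (nat \<Rightarrow> 'a \<Rightarrow> bool) \<Rightarrow> (nat \<Rightarrow> 'a \<Rightarrow> nat) \<Rightarrow> bool" where
  "srw_randomness M p X e U \<longleftrightarrow>
     (\<forall>j\<ge>1. X j \<in> borel_measurable M) \<and>
     (\<forall>i\<ge>2. e i \<in> measurable M (count_space UNIV)) \<and>
     (\<forall>i\<ge>2. U i \<in> measurable M (count_space UNIV)) \<and>
     (\<forall>i\<ge>2. measure M {x\<in>space M. e i x} = p) \<and>
     (\<forall>i\<ge>2. \<forall>j\<in>{1..i-1}. measure M {x\<in>space M. U i x = j} = 1 / real (i - 1)) \<and>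
     prob_space.indep_sets M
       (\<lambda>k. case k of
           Step j \<Rightarrow> {X j -` A \<inter> space M | A. A \<in> sets borel}
         | Coin i \<Rightarrow> {e i -` A \<inter> space M | A. True}
         | Pick i \<Rightarrow> {U i -` A \<inter> space M | A. True})
       ({Step j | j. j \<ge> 1} \<union> {Coin i | i. i \<ge> 2} \<union> {Pick i | i. i \<ge> 2})"

definition converges_in_distribution :: "'a measure \<Rightarrow> (nat \<Rightarrow> 'a \<Rightarrow> 'd::euclidean_space) \<Rightarrow> bool" where
  "converges_in_distribution M Y \<longleftrightarrow>
     (\<exists>\<mu>. prob_space \<mu> \<and> sets \<mu> = sets (borel :: 'd measure) \<and>
        (\<forall>f :: 'd \<Rightarrow> real. continuous_on UNIV f \<and> bounded (range f) \<longrightarrow>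
           (\<lambda>n. integral\<^sup>L M (\<lambda>x. f (Y n x))) \<longlonglongrightarrow> integral\<^sup>L \<mu> f))"

end

theory Submission
  imports Defs "HOL-Analysis.Harmonic_Numbers"
begin

text \<open>
  The \<open>i\<close>-th reinforced step is a copy of the original step \<open>X (ancestor i)\<close>, and the ancestors
  are determined by the coins and picks alone. Writing \<open>N n\<close> for the number of \<open>i \<le> n\<close> with
  ancestor \<open>1\<close>, we get \<open>S n = N n * X 1 + R n\<close> with \<open>X 1\<close> independent of \<open>(N n, R n)\<close>, so the
  characteristic function at \<open>\<theta>\<close> is bounded by \<open>E exp (- Re \<Psi> (N n * \<theta>) / n)\<close>.
  The count \<open>N\<close> follows an urn recursion under which the mean of \<open>\<Prod>j<N. 1 - s / j\<close> is the
  explicit product \<open>\<Prod>j<n. 1 - p s / j \<approx> n powr (- p s)\<close>; a Markov bound then gives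
  \<open>N n \<ge> n powr q\<close> with high probability for every \<open>q < p\<close>. Taking \<open>1/\<alpha> < q < p\<close> with
  \<open>Re \<Psi> \<theta> \<ge> |\<theta>| powr \<alpha>\<close> for large \<open>\<theta>\<close>, the exponent \<open>Re \<Psi> (N n * \<theta>) / n\<close> is then of
  order \<open>n powr (q \<alpha> - 1) \<rightarrow> \<infinity>\<close>. A limit law would have a characteristic function
  vanishing off the origin, contradicting its continuity at the origin.
\<close>

section \<open>Genealogy of the reinforced steps\<close>

fun ancestor :: "(nat \<Rightarrow> 'a \<Rightarrow> bool) \<Rightarrow> (nat \<Rightarrow> 'a \<Rightarrow> nat) \<Rightarrow> 'a \<Rightarrow> nat \<Rightarrow> nat" where
  "ancestor e U x i =
     (if i \<le> 1 \<or> \<not> e i x then i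
      else if 1 \<le> U i x \<and> U i x < i then ancestor e U x (U i x) else i)"

declare ancestor.simps[simp del] hatX.simps[simp del]

lemma hatX_eq_ancestor: "hatX X e U x i = X (ancestor e U x i) x"
proof (induction i rule: less_induct)
  case (less i)
  show ?case
    by (subst hatX.simps, subst ancestor.simps) (auto simp: less)
qed

lemma ancestor_bounds: "1 \<le> i \<Longrightarrow> 1 \<le> ancestor e U x i \<and> ancestor e U x i \<le> i"
proof (induction i rule: less_induct)
  case (less i)
  show ?case
  proof (cases "i \<le> 1 \<or> \<not> e i x \<or> \<not> (1 \<le> U i x \<and> U i x < i)")
    case True
    then have "ancestor e U x i = i" by (subst ancestor.simps) auto
    then show ?thesis using less(2) by simp
  next
    case False
    then have "ancestor e U x i = ancestor e U x (U i x)" by (subst ancestor.simps) auto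
    then show ?thesis using less(1)[of "U i x"] False by auto
  qed
qed

lemma ancestor_Suc_eq_1_iff:
  assumes "1 \<le> k"
  shows "ancestor e U x (Suc k) = 1 \<longleftrightarrow>
    e (Suc k) x \<and> (\<exists>j\<in>{1..k}. U (Suc k) x = j \<and> ancestor e U x j = 1)"
proof (cases "e (Suc k) x \<and> 1 \<le> U (Suc k) x \<and> U (Suc k) x < Suc k")
  case True
  then have "ancestor e U x (Suc k) = ancestor e U x (U (Suc k) x)"
    using assms by (subst ancestor.simps) auto
  then show ?thesis using True by auto
next
  case False
  then have "ancestor e U x (Suc k) = Suc k"
    using assms by (subst ancestor.simps) auto
  then show ?thesis using False assms by auto
qed

lemma measurable_ancestor:
  assumes e: "\<And>j. 2 \<le> j \<Longrightarrow> j \<le> n \<Longrightarrow> e j \<in> measurable N (count_space UNIV)"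
    and U: "\<And>j. 2 \<le> j \<Longrightarrow> j \<le> n \<Longrightarrow> U j \<in> measurable N (count_space UNIV)"
  shows "i \<le> n \<Longrightarrow> (\<lambda>x. ancestor e U x i) \<in> measurable N (count_space UNIV)"
proof (induction i rule: less_induct)
  case (less i)
  show ?case
  proof (cases "i \<le> 1")
    case True
    then have "(\<lambda>x. ancestor e U x i) = (\<lambda>x. i)" by (intro ext, subst ancestor.simps) auto
    then show ?thesis by simp
  next
    case False
    define g where "g j x = (if j < i then ancestor e U x j else i)" for j x
    have g: "(\<lambda>x. g j x) \<in> measurable N (count_space UNIV)" for j
      unfolding g_def using less by (cases "j < i") auto
    have [measurable]: "e i \<in> measurable N (count_space UNIV)"
      and U_i: "U i \<in> measurable N (count_space UNIV)"
      using False less(2) e U by auto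
    have [measurable]: "(\<lambda>x. g (U i x) x) \<in> measurable N (count_space UNIV)"
      by (rule measurable_compose_countable'[OF g]) (use U_i in auto)
    have "(\<lambda>x. ancestor e U x i) =
        (\<lambda>x. if \<not> e i x then i else if 1 \<le> U i x \<and> U i x < i then g (U i x) x else i)"
      using False by (intro ext, subst ancestor.simps) (auto simp: g_def)
    then show ?thesis using U_i by simp measurable
  qed
qed

definition srw_generator :: "'a measure \<Rightarrow> (nat \<Rightarrow> 'a \<Rightarrow> 'd::euclidean_space) \<Rightarrow>
    (nat \<Rightarrow> 'a \<Rightarrow> bool) \<Rightarrow> (nat \<Rightarrow> 'a \<Rightarrow> nat) \<Rightarrow> srw_idx \<Rightarrow> 'a set set" where
  "srw_generator M X e U k = (case k of
       Step j \<Rightarrow> {X j -` A \<inter> space M | A. A \<in> sets borel}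
     | Coin i \<Rightarrow> {e i -` A \<inter> space M | A. True}
     | Pick i \<Rightarrow> {U i -` A \<inter> space M | A. True})"

definition srw_indices :: "srw_idx set" where
  "srw_indices = {Step j | j. j \<ge> 1} \<union> {Coin i | i. i \<ge> 2} \<union> {Pick i | i. i \<ge> 2}"

definition srw_sigma :: "'a measure \<Rightarrow> (nat \<Rightarrow> 'a \<Rightarrow> 'd::euclidean_space) \<Rightarrow>
    (nat \<Rightarrow> 'a \<Rightarrow> bool) \<Rightarrow> (nat \<Rightarrow> 'a \<Rightarrow> nat) \<Rightarrow> srw_idx set \<Rightarrow> 'a measure" where
  "srw_sigma M X e U S = sigma (space M) (\<Union>k\<in>S. srw_generator M X e U k)"

lemma srw_generator_subset_Pow: "srw_generator M X e U k \<subseteq> Pow (space M)"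
  by (auto simp: srw_generator_def split: srw_idx.splits)

lemma space_srw_sigma [simp]: "space (srw_sigma M X e U S) = space M"
  unfolding srw_sigma_def by (rule space_measure_of) (use srw_generator_subset_Pow in blast)

lemma sets_srw_sigma:
  "sets (srw_sigma M X e U S) = sigma_sets (space M) (\<Union>k\<in>S. srw_generator M X e U k)"
  unfolding srw_sigma_def by (rule sets_measure_of) (use srw_generator_subset_Pow in blast)

lemma sets_srw_sigma_mono: "S \<subseteq> T \<Longrightarrow> sets (srw_sigma M X e U S) \<subseteq> sets (srw_sigma M X e U T)"
  unfolding sets_srw_sigma by (rule sigma_sets_mono') auto

lemma measurable_srw_sigma_mono:
  "S \<subseteq> T \<Longrightarrow> f \<in> measurable (srw_sigma M X e U S) N \<Longrightarrow> f \<in> measurable (srw_sigma M X e U T) N"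
  using measurable_mono[of N N "srw_sigma M X e U S" "srw_sigma M X e U T"]
    sets_srw_sigma_mono[of S T M X e U] by auto

lemma srw_generator_subset_sets:
  assumes "srw_randomness M p X e U" "k \<in> srw_indices"
  shows "srw_generator M X e U k \<subseteq> sets M"
  using assms by (cases k) (auto simp: srw_randomness_def srw_indices_def srw_generator_def)

lemma subalgebra_srw_sigma:
  assumes "srw_randomness M p X e U" "S \<subseteq> srw_indices"
  shows "subalgebra M (srw_sigma M X e U S)"
proof -
  have "sigma_sets (space M) (\<Union>k\<in>S. srw_generator M X e U k) \<subseteq> sets M"
    by (rule sets.sigma_sets_subset) (use srw_generator_subset_sets[OF assms(1)] assms(2) in blast)
  then show ?thesis unfolding subalgebra_def sets_srw_sigma by simp
qed

lemma measurable_coin_srw_sigma: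
  assumes "Coin i \<in> S"
  shows "e i \<in> measurable (srw_sigma M X e U S) (count_space UNIV)"
proof (rule measurableI)
  fix A :: "bool set"
  show "e i -` A \<inter> space (srw_sigma M X e U S) \<in> sets (srw_sigma M X e U S)"
    unfolding sets_srw_sigma space_srw_sigma
    by (rule sigma_sets.Basic, rule UN_I[OF assms]) (auto simp: srw_generator_def)
qed auto

lemma measurable_pick_srw_sigma:
  assumes "Pick i \<in> S"
  shows "U i \<in> measurable (srw_sigma M X e U S) (count_space UNIV)"
proof (rule measurableI)
  fix A :: "nat set"
  show "U i -` A \<inter> space (srw_sigma M X e U S) \<in> sets (srw_sigma M X e U S)"
    unfolding sets_srw_sigma space_srw_sigma
    by (rule sigma_sets.Basic, rule UN_I[OF assms]) (auto simp: srw_generator_def)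
qed auto

lemma measurable_step_srw_sigma:
  fixes X :: "nat \<Rightarrow> 'a \<Rightarrow> 'd::euclidean_space"
  assumes "Step j \<in> S"
  shows "X j \<in> borel_measurable (srw_sigma M X e U S)"
proof (rule measurableI)
  fix A :: "'d set" assume "A \<in> sets borel"
  then show "X j -` A \<inter> space (srw_sigma M X e U S) \<in> sets (srw_sigma M X e U S)"
    unfolding sets_srw_sigma space_srw_sigma
    by (intro sigma_sets.Basic UN_I[OF assms]) (auto simp: srw_generator_def)
qed auto

lemma Int_stable_vimage:
  assumes "\<And>A B. A \<in> S \<Longrightarrow> B \<in> S \<Longrightarrow> A \<inter> B \<in> S"
  shows "Int_stable {f -` A \<inter> \<Omega> | A. A \<in> S}"
  unfolding Int_stable_def
proof (intro ballI)
  fix a b assume "a \<in> {f -` A \<inter> \<Omega> | A. A \<in> S}" "b \<in> {f -` A \<inter> \<Omega> | A. A \<in> S}"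
  then obtain A B where "a = f -` A \<inter> \<Omega>" "b = f -` B \<inter> \<Omega>" "A \<in> S" "B \<in> S" by auto
  then show "a \<inter> b \<in> {f -` A \<inter> \<Omega> | A. A \<in> S}"
    using assms by (intro CollectI exI[of _ "A \<inter> B"]) auto
qed

lemma Int_stable_srw_generator: "Int_stable (srw_generator M X e U k)"
  using Int_stable_vimage[of "sets borel" "X _" "space M"] Int_stable_vimage[of UNIV "e _" "space M"]
    Int_stable_vimage[of UNIV "U _" "space M"]
  by (cases k) (simp_all add: srw_generator_def)

lemma indep_sets_srw_sigma:
  assumes "prob_space M" "srw_randomness M p X e U"
    and "(\<Union>j\<in>J. I j) \<subseteq> srw_indices" "disjoint_family_on I J"
  shows "prob_space.indep_sets M (\<lambda>j. sets (srw_sigma M X e U (I j))) J"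
proof -
  interpret prob_space M by fact
  have "indep_sets (srw_generator M X e U) srw_indices"
    using assms(2) unfolding srw_randomness_def srw_generator_def srw_indices_def
    by (simp add: fun_eq_iff)
  then have "indep_sets (srw_generator M X e U) (\<Union>j\<in>J. I j)"
    by (rule indep_sets_mono_index[OF assms(3)])
  from indep_sets_collect_sigma[OF this Int_stable_srw_generator assms(4)]
  show ?thesis unfolding sets_srw_sigma .
qed

lemma Collect_in_srw_sigma:
  "Measurable.pred (srw_sigma M X e U S) P \<Longrightarrow> {x\<in>space M. P x} \<in> sets (srw_sigma M X e U S)"
  by (simp add: pred_def)

section \<open>The number of copies of the first step\<close>

text \<open>\<open>copies_pmf p k\<close> is the law of the number of copies of the first step among the
  first \<open>k + 1\<close> reinforced steps.\<close>

fun copies_pmf :: "real \<Rightarrow> nat \<Rightarrow> nat \<Rightarrow> real" where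
  "copies_pmf p 0 m = (if m = 1 then 1 else 0)"
| "copies_pmf p (Suc k) m = copies_pmf p k m * (1 - p * real m / real (Suc k))
     + copies_pmf p k (m - 1) * (p * real (m - 1) / real (Suc k))"

locale srw_setting = prob_space M for M :: "'a measure" +
  fixes p :: real and X :: "nat \<Rightarrow> 'a \<Rightarrow> 'd::euclidean_space"
    and e :: "nat \<Rightarrow> 'a \<Rightarrow> bool" and U :: "nat \<Rightarrow> 'a \<Rightarrow> nat"
  assumes randomness: "srw_randomness M p X e U"
begin

definition first_step_copies :: "nat \<Rightarrow> 'a \<Rightarrow> nat" where
  "first_step_copies k x = card {i\<in>{1..k}. ancestor e U x i = 1}"

text \<open>The coins and picks up to time \<open>k\<close> determine the genealogy of the first \<open>k\<close> steps; since
  they are independent of the steps, so is everything measurable with respect to \<open>choices k\<close>.\<close>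

definition choice_indices :: "nat \<Rightarrow> srw_idx set" where
  "choice_indices k = {Coin j | j. 2 \<le> j \<and> j \<le> k} \<union> {Pick j | j. 2 \<le> j \<and> j \<le> k}"

abbreviation choices :: "nat \<Rightarrow> 'a measure" where
  "choices k \<equiv> srw_sigma M X e U (choice_indices k)"

lemma choice_indices_subset: "choice_indices k \<subseteq> srw_indices"
  unfolding choice_indices_def srw_indices_def by auto

lemma subalgebra_choices: "subalgebra M (choices k)"
  by (rule subalgebra_srw_sigma[OF randomness choice_indices_subset])

lemma sets_choices_subset_events: "sets (choices k) \<subseteq> events"
  using subalgebra_choices by (simp add: subalgebra_def)

lemma measurable_ancestor_choices:
  "j \<le> k \<Longrightarrow> (\<lambda>x. ancestor e U x j) \<in> measurable (choices k) (count_space UNIV)"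
  by (rule measurable_ancestor[of k])
     (auto intro!: measurable_coin_srw_sigma measurable_pick_srw_sigma simp: choice_indices_def)

lemma first_step_copies_Suc:
  "first_step_copies (Suc k) x = first_step_copies k x + (if ancestor e U x (Suc k) = 1 then 1 else 0)"
proof -
  have "{i\<in>{1..Suc k}. ancestor e U x i = 1} = {i\<in>{1..k}. ancestor e U x i = 1} \<union>
      (if ancestor e U x (Suc k) = 1 then {Suc k} else {})"
    by (auto simp: le_Suc_eq)
  then show ?thesis unfolding first_step_copies_def by (auto simp: card_insert_if)
qed

lemma first_step_copies_le: "first_step_copies k x \<le> k"
proof -
  have "first_step_copies k x \<le> card {1..k}"
    unfolding first_step_copies_def by (rule card_mono) auto
  then show ?thesis by simp
qed

lemma first_step_copies_1: "first_step_copies (Suc 0) x = 1"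
proof -
  have "{i\<in>{1..Suc 0}. ancestor e U x i = 1} = {1}" by (auto simp: ancestor.simps)
  then show ?thesis by (simp add: first_step_copies_def)
qed

lemma measurable_first_step_copies:
  "k \<le> l \<Longrightarrow> first_step_copies k \<in> measurable (choices l) (count_space UNIV)"
proof (induction k)
  case 0
  then show ?case by (simp add: first_step_copies_def)
next
  case (Suc k)
  note measurable_ancestor_choices[OF Suc(2), measurable]
  have "(\<lambda>x. a + (if ancestor e U x (Suc k) = 1 then 1 else 0)) \<in> measurable (choices l) (count_space UNIV)"
    for a :: nat
    by measurable
  then show ?case unfolding first_step_copies_Suc[abs_def]
    by (rule measurable_compose_countable'[OF _ Suc(1)]) (use Suc(2) in auto)
qed

lemma first_step_copies_event_in_choices:
  "k \<le> l \<Longrightarrow> {x\<in>space M. first_step_copies k x = m} \<in> sets (choices l)"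
  using measurable_first_step_copies[measurable] by (intro Collect_in_srw_sigma) measurable

lemma prob_coin_pick_choices:
  assumes k: "1 \<le> k" and D: "D \<in> sets (choices k)" and j: "j \<in> {1..k}"
  shows "prob ({x\<in>space M. e (Suc k) x} \<inter> {x\<in>space M. U (Suc k) x = j} \<inter> D) = p / real k * prob D"
proof -
  define I where "I i = (if i = (0::nat) then {Coin (Suc k)} else if i = 1 then {Pick (Suc k)}
    else choice_indices k)" for i
  define A where "A i = (if i = (0::nat) then {x\<in>space M. e (Suc k) x}
    else if i = 1 then {x\<in>space M. U (Suc k) x = j} else D)" for i
  have indep: "indep_sets (\<lambda>i. sets (srw_sigma M X e U (I i))) {0, 1, 2}"
    by (rule indep_sets_srw_sigma[OF prob_space_axioms randomness])
       (use k choice_indices_subset in \<open>auto simp: I_def srw_indices_def disjoint_family_on_def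
         choice_indices_def\<close>)
  note measurable_coin_srw_sigma[where i="Suc k" and S="{Coin (Suc k)}" and M=M and X=X and e=e and U=U,
      measurable]
    measurable_pick_srw_sigma[where i="Suc k" and S="{Pick (Suc k)}" and M=M and X=X and e=e and U=U,
      measurable]
  have "A i \<in> sets (srw_sigma M X e U (I i))" if "i \<in> {0, 1, 2}" for i
    using that D unfolding A_def I_def by (auto intro!: Collect_in_srw_sigma)
  then have "prob (\<Inter>i\<in>{0, 1, 2}. A i) = (\<Prod>i\<in>{0, 1, 2}. prob (A i))"
    by (intro indep_setsD[OF indep]) auto
  moreover have "prob {x\<in>space M. e (Suc k) x} = p" "prob {x\<in>space M. U (Suc k) x = j} = 1 / real k"
    using randomness k j unfolding srw_randomness_def by auto
  ultimately show ?thesis by (simp add: A_def ac_simps)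
qed

lemma sum_prob_ancestor_eq_1:
  "(\<Sum>j\<in>{1..k}. prob {x\<in>space M. ancestor e U x j = 1 \<and> first_step_copies k x = m})
     = real m * prob {x\<in>space M. first_step_copies k x = m}"
proof -
  let ?D = "\<lambda>j. {x\<in>space M. ancestor e U x j = 1 \<and> first_step_copies k x = m}"
  let ?C = "{x\<in>space M. first_step_copies k x = m}"
  have D: "?D j \<in> events" if "j \<in> {1..k}" for j
  proof -
    note measurable_ancestor_choices[of j k, measurable] measurable_first_step_copies[of k k, measurable]
    have "?D j \<in> sets (choices k)"
      using that by (intro Collect_in_srw_sigma) measurable
    then show ?thesis using sets_choices_subset_events by blast
  qed
  have C: "?C \<in> events"
    using first_step_copies_event_in_choices[of k k m] sets_choices_subset_events by blast
  have pointwise: "(\<Sum>j\<in>{1..k}. indicator (?D j) x) = real m * indicator ?C x" if "x \<in> space M" for x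
  proof (cases "first_step_copies k x = m")
    case True
    have "(\<Sum>j\<in>{1..k}. indicator (?D j) x) = (\<Sum>j\<in>{1..k}. if ancestor e U x j = 1 then 1 else 0 :: real)"
      using that True by (intro sum.cong) (auto simp: indicator_def)
    also have "\<dots> = real m"
      using True by (simp add: sum.inter_filter[symmetric] first_step_copies_def)
    finally show ?thesis using that True by (simp add: indicator_def)
  qed (simp add: indicator_def)
  have "(\<Sum>j\<in>{1..k}. prob (?D j)) = (\<Sum>j\<in>{1..k}. LINT x|M. indicator (?D j) x)"
    using D by (intro sum.cong) auto
  also have "\<dots> = LINT x|M. (\<Sum>j\<in>{1..k}. indicator (?D j) x)"
    using D by (intro Bochner_Integration.integral_sum[symmetric] integrable_real_indicator) (auto simp: less_top[symmetric])
  also have "\<dots> = LINT x|M. real m * indicator ?C x"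
    using pointwise by (rule Bochner_Integration.integral_cong[OF refl])
  also have "\<dots> = real m * prob ?C" using C by simp
  finally show ?thesis .
qed

lemma prob_new_copy:
  assumes k: "1 \<le> k"
  shows "prob ({x\<in>space M. first_step_copies k x = m} \<inter> {x\<in>space M. ancestor e U x (Suc k) = 1})
         = p * real m / real k * prob {x\<in>space M. first_step_copies k x = m}"
proof -
  let ?E = "{x\<in>space M. e (Suc k) x}"
  let ?V = "\<lambda>j. {x\<in>space M. U (Suc k) x = j}"
  let ?D = "\<lambda>j. {x\<in>space M. ancestor e U x j = 1 \<and> first_step_copies k x = m}"
  have D: "?D j \<in> sets (choices k)" if "j \<in> {1..k}" for j
  proof -
    note measurable_ancestor_choices[of j k, measurable] measurable_first_step_copies[of k k, measurable]
    show ?thesis using that by (intro Collect_in_srw_sigma) measurable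
  qed
  have [measurable]: "e (Suc k) \<in> measurable M (count_space UNIV)" "U (Suc k) \<in> measurable M (count_space UNIV)"
    using randomness k unfolding srw_randomness_def by auto
  have "?E \<in> events" "?V j \<in> events" for j
    by measurable
  then have events: "?E \<inter> ?V j \<inter> ?D j \<in> events" if "j \<in> {1..k}" for j
    using D[OF that] sets_choices_subset_events by blast
  have eq: "{x\<in>space M. first_step_copies k x = m} \<inter> {x\<in>space M. ancestor e U x (Suc k) = 1}
      = (\<Union>j\<in>{1..k}. ?E \<inter> ?V j \<inter> ?D j)"
  proof (intro equalityI subsetI)
    fix x assume "x \<in> {x\<in>space M. first_step_copies k x = m} \<inter> {x\<in>space M. ancestor e U x (Suc k) = 1}"
    then show "x \<in> (\<Union>j\<in>{1..k}. ?E \<inter> ?V j \<inter> ?D j)"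
      using ancestor_Suc_eq_1_iff[OF k, of e U x] by auto
  next
    fix x assume "x \<in> (\<Union>j\<in>{1..k}. ?E \<inter> ?V j \<inter> ?D j)"
    then show "x \<in> {x\<in>space M. first_step_copies k x = m} \<inter> {x\<in>space M. ancestor e U x (Suc k) = 1}"
      using ancestor_Suc_eq_1_iff[OF k, of e U x] by auto
  qed
  have disj: "disjoint_family_on (\<lambda>j. ?E \<inter> ?V j \<inter> ?D j) {1..k}"
    unfolding disjoint_family_on_def by blast
  have "prob (\<Union>j\<in>{1..k}. ?E \<inter> ?V j \<inter> ?D j) = (\<Sum>j\<in>{1..k}. prob (?E \<inter> ?V j \<inter> ?D j))"
    by (rule finite_measure_finite_Union[OF finite_atLeastAtMost _ disj]) (use events in blast)
  also have "\<dots> = (\<Sum>j\<in>{1..k}. p / real k * prob (?D j))"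
    by (rule sum.cong[OF refl], rule prob_coin_pick_choices[OF k D]) simp_all
  also have "\<dots> = p / real k * (\<Sum>j\<in>{1..k}. prob (?D j))"
    by (simp only: sum_distrib_left)
  also have "\<dots> = p * real m / real k * prob {x\<in>space M. first_step_copies k x = m}"
    by (simp only: sum_prob_ancestor_eq_1) simp
  finally show ?thesis by (simp only: eq)
qed

lemma prob_first_step_copies_Suc:
  assumes K: "1 \<le> K"
  shows "prob {x\<in>space M. first_step_copies (Suc K) x = m}
    = prob {x\<in>space M. first_step_copies K x = m} * (1 - p * real m / real K)
      + prob {x\<in>space M. first_step_copies K x = m - 1} * (p * real (m - 1) / real K)"
proof -
  let ?C = "\<lambda>m. {x\<in>space M. first_step_copies K x = m}"
  let ?B = "{x\<in>space M. ancestor e U x (Suc K) = 1}"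
  have C: "?C m \<in> events" for m
    using first_step_copies_event_in_choices[of K K m] sets_choices_subset_events by blast
  have B: "?B \<in> events"
  proof -
    note measurable_ancestor_choices[of "Suc K" "Suc K", measurable]
    have "?B \<in> sets (choices (Suc K))" by (intro Collect_in_srw_sigma) measurable
    then show ?thesis using sets_choices_subset_events by blast
  qed
  have stay: "prob (?C m - ?B) = prob (?C m) * (1 - p * real m / real K)" for m
  proof -
    have "prob (?C m - ?B) = prob (?C m) - prob (?C m \<inter> ?B)"
      by (rule finite_measure_Diff'[OF C B])
    also have "\<dots> = prob (?C m) - p * real m / real K * prob (?C m)"
      by (simp only: prob_new_copy[OF K])
    finally show ?thesis by (simp add: algebra_simps)
  qed
  show ?thesis
  proof (cases m)
    case 0
    then have "{x\<in>space M. first_step_copies (Suc K) x = m} = ?C 0 - ?B"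
      by (auto simp: first_step_copies_Suc)
    then have "prob {x\<in>space M. first_step_copies (Suc K) x = m} = prob (?C 0) * (1 - p * real 0 / real K)"
      using stay[of 0] by (simp only:)
    then show ?thesis using 0 by simp
  next
    case (Suc m')
    then have "{x\<in>space M. first_step_copies (Suc K) x = m} = (?C m - ?B) \<union> (?C m' \<inter> ?B)"
      by (auto simp: first_step_copies_Suc)
    then have "prob {x\<in>space M. first_step_copies (Suc K) x = m} = prob (?C m - ?B) + prob (?C m' \<inter> ?B)"
      by (simp, intro finite_measure_Union) (use C B in auto)
    then show ?thesis using stay[of m] prob_new_copy[OF K, of m'] Suc by simp
  qed
qed

lemma prob_first_step_copies: "prob {x\<in>space M. first_step_copies (Suc k) x = m} = copies_pmf p k m"
proof (induction k arbitrary: m)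
  case 0
  show ?case by (cases "m = 1") (simp_all add: first_step_copies_1 prob_space)
next
  case (Suc k)
  then show ?case by (subst prob_first_step_copies_Suc) (simp_all add: mult.commute)
qed

end

section \<open>Separating the first step\<close>

lemma borel_measurable_cis [measurable]: "(cis :: real \<Rightarrow> complex) \<in> borel_measurable borel"
  by (rule borel_measurable_continuous_onI) (use continuous_on_cis[OF continuous_on_id] in simp)

lemma (in prob_space) indep_var_if_indep_set:
  assumes indep: "indep_set (sets N) (sets N')"
    and sub: "subalgebra M N" "subalgebra M N'"
    and Y: "Y \<in> measurable N S" and Z: "Z \<in> measurable N' T"
  shows "indep_var S Y T Z"
proof -
  have "sigma_sets (space M) {Y -` A \<inter> space M | A. A \<in> sets S} \<subseteq> sets N"
    using sets.sigma_sets_subset[of "{Y -` A \<inter> space M | A. A \<in> sets S}" N] measurable_sets[OF Y] sub(1)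
    by (auto simp: subalgebra_def)
  moreover have "sigma_sets (space M) {Z -` A \<inter> space M | A. A \<in> sets T} \<subseteq> sets N'"
    using sets.sigma_sets_subset[of "{Z -` A \<inter> space M | A. A \<in> sets T}" N'] measurable_sets[OF Z] sub(2)
    by (auto simp: subalgebra_def)
  ultimately have "indep_set (sigma_sets (space M) {Y -` A \<inter> space M | A. A \<in> sets S})
      (sigma_sets (space M) {Z -` A \<inter> space M | A. A \<in> sets T})"
    using indep unfolding indep_sets2_eq by blast
  then show ?thesis
    unfolding indep_var_eq using measurable_from_subalg[OF sub(1) Y] measurable_from_subalg[OF sub(2) Z]
    by simp
qed

lemma (in prob_space) norm_integral_indicator_cis_le:
  assumes "A \<subseteq> space M" "R \<in> borel_measurable M"
  shows "norm (LINT x|M. (indicator A x :: complex) * cis (R x)) \<le> prob A"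
proof -
  have "norm (LINT x|M. (indicator A x :: complex) * cis (R x))
      \<le> (LINT x|M. norm ((indicator A x :: complex) * cis (R x)))"
    by (rule integral_norm_bound)
  also have "\<dots> = (LINT x|M. indicator A x)"
    by (intro Bochner_Integration.integral_cong) (auto simp: norm_mult indicator_def)
  also have "\<dots> = prob A"
    using assms(1) by (simp add: Int_absorb2)
  finally show ?thesis .
qed

text \<open>Proof by conditioning on the value of \<open>C\<close>.\<close>

lemma (in prob_space) norm_integral_cis_mixture_le:
  fixes C :: "'a \<Rightarrow> nat" and R Z :: "'a \<Rightarrow> real"
  assumes indep: "indep_set (sets N) (sets N')" and sub: "subalgebra M N" "subalgebra M N'"
    and C: "C \<in> measurable N (count_space UNIV)" "\<And>x. x \<in> space M \<Longrightarrow> C x < L"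
    and R: "R \<in> borel_measurable N" and Z: "Z \<in> borel_measurable N'"
  shows "norm (LINT x|M. cis (R x + real (C x) * Z x))
    \<le> (\<Sum>m<L. prob {x\<in>space M. C x = m} * norm (LINT x|M. cis (real m * Z x)))"
proof -
  define A where "A m = {x\<in>space M. C x = m}" for m
  define Y where "Y m x = (indicator (A m) x :: complex) * cis (R x)" for m x
  define W where "W m x = cis (real m * Z x)" for m x
  have A: "A m \<in> sets N" for m
  proof -
    have "A m = C -` {m} \<inter> space N"
      using sub(1) by (auto simp: A_def subalgebra_def)
    then show ?thesis using measurable_sets[OF C(1)] by simp
  qed
  have Y: "Y m \<in> borel_measurable N" for m
    using A R unfolding Y_def by measurable
  have W: "W m \<in> borel_measurable N'" for m
    using Z unfolding W_def by measurable
  have indep_YW: "indep_var borel (Y m) borel (W m)" for m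
    by (rule indep_var_if_indep_set[OF indep sub Y W])
  have int_Y: "integrable M (Y m)" for m
    using measurable_from_subalg[OF sub(1) Y]
    by (intro integrable_const_bound[where B=1]) (auto simp: Y_def norm_mult indicator_def)
  have int_W: "integrable M (W m)" for m
    using measurable_from_subalg[OF sub(2) W]
    by (intro integrable_const_bound[where B=1]) (auto simp: W_def)
  have pointwise: "cis (R x + real (C x) * Z x) = (\<Sum>m<L. Y m x * W m x)" if "x \<in> space M" for x
  proof -
    have "(\<Sum>m<L. Y m x * W m x) = (\<Sum>m<L. if C x = m then cis (R x) * W m x else 0)"
      using that by (intro sum.cong) (auto simp: Y_def A_def)
    also have "\<dots> = cis (R x + real (C x) * Z x)"
      using C(2)[OF that] by (simp add: W_def cis_mult)
    finally show ?thesis ..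
  qed
  have "(LINT x|M. cis (R x + real (C x) * Z x)) = (LINT x|M. (\<Sum>m<L. Y m x * W m x))"
    by (rule Bochner_Integration.integral_cong[OF refl pointwise])
  also have "\<dots> = (\<Sum>m<L. LINT x|M. Y m x * W m x)"
    by (rule Bochner_Integration.integral_sum) (rule indep_var_integrable[OF indep_YW int_Y int_W])
  also have "\<dots> = (\<Sum>m<L. (LINT x|M. Y m x) * (LINT x|M. W m x))"
    by (intro sum.cong refl indep_var_lebesgue_integral[OF indep_YW int_Y int_W])
  finally have "norm (LINT x|M. cis (R x + real (C x) * Z x))
      \<le> (\<Sum>m<L. norm (LINT x|M. Y m x) * norm (LINT x|M. W m x))"
    by (simp add: norm_mult order_trans[OF norm_sum])
  also have "\<dots> \<le> (\<Sum>m<L. prob (A m) * norm (LINT x|M. W m x))"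
    using A sub(1) R unfolding Y_def
    by (intro sum_mono mult_right_mono norm_integral_indicator_cis_le)
       (auto simp: A_def subalgebra_def intro: measurable_from_subalg)
  finally show ?thesis by (simp add: A_def W_def)
qed

context srw_setting
begin

definition indices_but_first :: "nat \<Rightarrow> srw_idx set" where
  "indices_but_first k = choice_indices k \<union> {Step j | j. 2 \<le> j \<and> j \<le> k}"

definition srw_rest :: "nat \<Rightarrow> 'a \<Rightarrow> 'd" where
  "srw_rest k x = (\<Sum>i\<in>{1..k}. if 2 \<le> ancestor e U x i \<and> ancestor e U x i \<le> k
     then X (ancestor e U x i) x else 0)"

lemma srw_eq_first_step_copies_plus_rest:
  "srw X e U k x = real (first_step_copies k x) *\<^sub>R X 1 x + srw_rest k x"
proof -
  have "X (ancestor e U x i) x = (if ancestor e U x i = 1 then X 1 x else 0)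
      + (if 2 \<le> ancestor e U x i \<and> ancestor e U x i \<le> k then X (ancestor e U x i) x else 0)"
    if "i \<in> {1..k}" for i
    using ancestor_bounds[of i e U x] that by (cases "ancestor e U x i = 1") auto
  then have "srw X e U k x = (\<Sum>i\<in>{1..k}. if ancestor e U x i = 1 then X 1 x else 0) + srw_rest k x"
    unfolding srw_def srw_rest_def hatX_eq_ancestor by (simp add: sum.distrib[symmetric])
  also have "(\<Sum>i\<in>{1..k}. if ancestor e U x i = 1 then X 1 x else 0) = real (first_step_copies k x) *\<^sub>R X 1 x"
    unfolding first_step_copies_def by (simp add: sum.inter_filter[symmetric] sum_constant_scaleR)
  finally show ?thesis .
qed

lemma subalgebra_indices_but_first: "subalgebra M (srw_sigma M X e U (indices_but_first k))"
  by (rule subalgebra_srw_sigma[OF randomness])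
     (auto simp: indices_but_first_def choice_indices_def srw_indices_def)

lemma subalgebra_first_step: "subalgebra M (srw_sigma M X e U {Step 1})"
  by (rule subalgebra_srw_sigma[OF randomness]) (simp add: srw_indices_def)

lemma indep_set_first_step:
  "indep_set (sets (srw_sigma M X e U (indices_but_first k))) (sets (srw_sigma M X e U {Step 1}))"
proof -
  have "indep_sets (\<lambda>b. sets (srw_sigma M X e U (if b then indices_but_first k else {Step 1}))) UNIV"
    by (rule indep_sets_srw_sigma[OF prob_space_axioms randomness])
       (auto simp: srw_indices_def disjoint_family_on_def indices_but_first_def choice_indices_def)
  moreover have "(\<lambda>b. sets (srw_sigma M X e U (if b then indices_but_first k else {Step 1})))
      = case_bool (sets (srw_sigma M X e U (indices_but_first k))) (sets (srw_sigma M X e U {Step 1}))"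
    by (simp add: fun_eq_iff split: bool.split)
  ultimately show ?thesis
    unfolding indep_set_def by simp
qed

lemma measurable_first_step_copies_but_first:
  "first_step_copies k \<in> measurable (srw_sigma M X e U (indices_but_first k)) (count_space UNIV)"
  by (rule measurable_srw_sigma_mono[OF _ measurable_first_step_copies[OF order_refl]])
     (auto simp: indices_but_first_def)

lemma measurable_srw_rest: "srw_rest k \<in> borel_measurable (srw_sigma M X e U (indices_but_first k))"
proof -
  let ?N = "srw_sigma M X e U (indices_but_first k)"
  define G where "G j x = (if 2 \<le> j \<and> j \<le> k then X j x else 0)" for j x
  have G: "(\<lambda>x. G j x) \<in> borel_measurable ?N" for j
    by (cases "2 \<le> j \<and> j \<le> k")
       (auto intro!: measurable_step_srw_sigma[unfolded eta_contract_eq] simp: G_def indices_but_first_def)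
  have "(\<lambda>x. ancestor e U x i) \<in> measurable ?N (count_space UNIV)" if "i \<le> k" for i
    by (rule measurable_srw_sigma_mono[OF _ measurable_ancestor_choices[OF that]])
       (auto simp: indices_but_first_def)
  then have "(\<lambda>x. G (ancestor e U x i) x) \<in> borel_measurable ?N" if "i \<in> {1..k}" for i
    using that by (intro measurable_compose_countable'[OF G]) auto
  moreover have "srw_rest k = (\<lambda>x. \<Sum>i\<in>{1..k}. G (ancestor e U x i) x)"
    by (simp add: fun_eq_iff srw_rest_def G_def)
  ultimately show ?thesis by simp
qed

lemma measurable_srw: "srw X e U k \<in> borel_measurable M"
proof -
  have "first_step_copies k \<in> measurable M (count_space UNIV)"
    by (rule measurable_from_subalg[OF subalgebra_indices_but_first measurable_first_step_copies_but_first])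
  then have "(\<lambda>x. real (first_step_copies k x)) \<in> borel_measurable M"
    by (rule measurable_compose) simp
  moreover have "X 1 \<in> borel_measurable M"
    using randomness unfolding srw_randomness_def by simp
  moreover have "srw_rest k \<in> borel_measurable M"
    by (rule measurable_from_subalg[OF subalgebra_indices_but_first measurable_srw_rest])
  ultimately show ?thesis
    unfolding srw_eq_first_step_copies_plus_rest[abs_def]
    by (intro borel_measurable_add borel_measurable_scaleR)
qed

lemma norm_char_srw_le:
  "norm (LINT x|M. cis (\<theta> \<bullet> srw X e U k x))
     \<le> (\<Sum>m<Suc k. prob {x\<in>space M. first_step_copies k x = m} * norm (LINT x|M. cis (real m * (\<theta> \<bullet> X 1 x))))"
proof -
  have "X 1 \<in> borel_measurable (srw_sigma M X e U {Step 1})"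
    by (rule measurable_step_srw_sigma) simp
  then have Z: "(\<lambda>x. \<theta> \<bullet> X 1 x) \<in> borel_measurable (srw_sigma M X e U {Step 1})"
    by (intro borel_measurable_inner measurable_const) simp_all
  have R: "(\<lambda>x. \<theta> \<bullet> srw_rest k x) \<in> borel_measurable (srw_sigma M X e U (indices_but_first k))"
    by (intro borel_measurable_inner measurable_const measurable_srw_rest) simp
  have "\<theta> \<bullet> srw X e U k x = \<theta> \<bullet> srw_rest k x + real (first_step_copies k x) * (\<theta> \<bullet> X 1 x)" for x
    by (simp add: srw_eq_first_step_copies_plus_rest inner_add_right)
  then show ?thesis
    using norm_integral_cis_mixture_le[OF indep_set_first_step subalgebra_indices_but_first
        subalgebra_first_step measurable_first_step_copies_but_first _ R Z, of "Suc k"]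
      first_step_copies_le by (simp add: less_Suc_eq_le)
qed

end

section \<open>The law of the copy count\<close>

lemma copies_pmf_0_right [simp]: "copies_pmf p k 0 = 0"
  by (induction k) simp_all

lemma copies_pmf_eq_0: "k + 1 < m \<Longrightarrow> copies_pmf p k m = 0"
  by (induction k arbitrary: m) simp_all

lemma copies_pmf_nonneg:
  assumes "0 \<le> p" "p \<le> 1"
  shows "0 \<le> copies_pmf p k m"
proof (induction k arbitrary: m)
  case (Suc k)
  have "0 \<le> copies_pmf p k m * (1 - p * real m / real (Suc k))"
  proof (cases "m \<le> Suc k")
    case True
    then have "p * real m \<le> 1 * real (Suc k)"
      using assms by (intro mult_mono) auto
    then have "0 \<le> 1 - p * real m / real (Suc k)"
      by (simp add: field_simps)
    then show ?thesis using Suc.IH by simp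
  qed (simp add: copies_pmf_eq_0)
  then show ?case using Suc.IH assms by simp
qed simp

definition decay_prod :: "real \<Rightarrow> nat \<Rightarrow> real" where
  "decay_prod s m = (\<Prod>j\<in>{1..<m}. 1 - s / real j)"

lemma decay_prod_Suc: "1 \<le> m \<Longrightarrow> decay_prod s (Suc m) = decay_prod s m * (1 - s / real m)"
  unfolding decay_prod_def by (simp add: prod.atLeastLessThan_Suc)

lemma decay_prod_factor_bounds:
  "0 \<le> s \<Longrightarrow> s \<le> 1 \<Longrightarrow> 1 \<le> j \<Longrightarrow> 1 - s \<le> 1 - s / real j \<and> 1 - s / real j \<le> 1"
  using divide_left_mono[of 1 "real j" s] by simp

lemma decay_prod_pos: "0 \<le> s \<Longrightarrow> s < 1 \<Longrightarrow> 0 < decay_prod s m"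
  unfolding decay_prod_def
  by (rule prod_pos) (use decay_prod_factor_bounds[of s] in fastforce)

lemma decay_prod_antimono:
  assumes "0 \<le> s" "s \<le> 1" "m \<le> m'"
  shows "decay_prod s m' \<le> decay_prod s m"
proof -
  have factor: "0 \<le> 1 - s / real j \<and> 1 - s / real j \<le> 1" for j
    using decay_prod_factor_bounds[OF assms(1,2), of j] assms by (cases "j = 0") auto
  have "decay_prod s m' = decay_prod s m * (\<Prod>j\<in>{max 1 m..<m'}. 1 - s / real j)"
  proof -
    have "{1..<m'} = {1..<m} \<union> {max 1 m..<m'}" "{1..<m} \<inter> {max 1 m..<m'} = {}"
      using assms(3) by auto
    then show ?thesis unfolding decay_prod_def by (simp add: prod.union_disjoint)
  qed
  moreover have "(\<Prod>j\<in>{max 1 m..<m'}. 1 - s / real j) \<le> 1"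
    using factor by (intro prod_le_1) auto
  moreover have "0 \<le> decay_prod s m"
    unfolding decay_prod_def using factor by (intro prod_nonneg) auto
  ultimately show ?thesis by (simp add: mult_left_le)
qed

text \<open>The weight lost by \<open>decay_prod s\<close> at a new copy exactly compensates the drift of the
  copy count, which makes the mean of \<open>decay_prod s\<close> under \<open>copies_pmf p k\<close> explicit.\<close>

lemma decay_prod_transition:
  assumes "m \<noteq> 0"
  shows "(1 - p * real m / K) * decay_prod s m + p * real m / K * decay_prod s (Suc m)
     = (1 - p * s / K) * decay_prod s m"
proof -
  have "p * real m / K * decay_prod s (Suc m) = p * real m / K * decay_prod s m - p * s / K * decay_prod s m"
    using assms by (cases "K = 0") (simp_all add: decay_prod_Suc field_simps)
  then show ?thesis by (simp add: algebra_simps)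
qed

lemma sum_copies_pmf_decay_prod_Suc:
  "(\<Sum>m<Suc k + 2. copies_pmf p (Suc k) m * decay_prod s m)
     = (1 - p * s / real (Suc k)) * (\<Sum>m<k + 2. copies_pmf p k m * decay_prod s m)"
proof -
  let ?K = "real (Suc k)"
  have step: "copies_pmf p k m * (1 - p * real m / ?K) * decay_prod s m
      + copies_pmf p k m * (p * real m / ?K) * decay_prod s (Suc m)
      = (1 - p * s / ?K) * (copies_pmf p k m * decay_prod s m)" for m
  proof (cases "m = 0")
    case False
    then show ?thesis
      using arg_cong[OF decay_prod_transition[OF False, of p ?K s], of "\<lambda>t. copies_pmf p k m * t"]
      by (simp add: algebra_simps)
  qed simp
  have stay: "(\<Sum>m<Suc (k + 2). copies_pmf p k m * (1 - p * real m / ?K) * decay_prod s m)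
      = (\<Sum>m<k + 2. copies_pmf p k m * (1 - p * real m / ?K) * decay_prod s m)"
    by (simp add: copies_pmf_eq_0)
  have new: "(\<Sum>m<Suc (k + 2). copies_pmf p k (m - 1) * (p * real (m - 1) / ?K) * decay_prod s m)
      = (\<Sum>m<k + 2. copies_pmf p k m * (p * real m / ?K) * decay_prod s (Suc m))"
    by (subst sum.lessThan_Suc_shift) simp
  have "(\<Sum>m<Suc k + 2. copies_pmf p (Suc k) m * decay_prod s m)
      = (\<Sum>m<Suc (k + 2). copies_pmf p k m * (1 - p * real m / ?K) * decay_prod s m)
        + (\<Sum>m<Suc (k + 2). copies_pmf p k (m - 1) * (p * real (m - 1) / ?K) * decay_prod s m)"
    by (simp add: sum.distrib[symmetric] algebra_simps)
  also have "\<dots> = (\<Sum>m<k + 2. (1 - p * s / ?K) * (copies_pmf p k m * decay_prod s m))"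
    unfolding stay new sum.distrib[symmetric] step ..
  also have "\<dots> = (1 - p * s / ?K) * (\<Sum>m<k + 2. copies_pmf p k m * decay_prod s m)"
    by (simp only: sum_distrib_left)
  finally show ?thesis .
qed

lemma sum_copies_pmf_decay_prod:
  "(\<Sum>m<k + 2. copies_pmf p k m * decay_prod s m) = (\<Prod>j\<in>{1..k}. 1 - p * s / real j)"
proof (induction k)
  case 0
  show ?case by (simp add: numeral_2_eq_2 decay_prod_def)
next
  case (Suc k)
  have "(\<Sum>m<Suc k + 2. copies_pmf p (Suc k) m * decay_prod s m)
      = (1 - p * s / real (Suc k)) * (\<Prod>j\<in>{1..k}. 1 - p * s / real j)"
    by (simp only: sum_copies_pmf_decay_prod_Suc Suc.IH)
  then show ?case by (simp add: mult.commute)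
qed

lemma sum_copies_pmf: "(\<Sum>m<k + 2. copies_pmf p k m) = 1"
  using sum_copies_pmf_decay_prod[of p k 0] by (simp add: decay_prod_def)

section \<open>The copy count grows like a power \<open>k\<^sup>p\<close>\<close>

lemma harm_le_one_plus_ln: "1 \<le> n \<Longrightarrow> harm n \<le> 1 + ln (real n)"
proof -
  assume "1 \<le> n"
  then obtain n' where n': "n = Suc n'" by (cases n) auto
  have "harm (Suc n') - ln (real (Suc n')) \<le> harm (Suc 0) - ln (real (Suc 0))"
    using decseqD[OF decseq_harm_diff_ln, of 0 n'] by simp
  then show ?thesis unfolding n' by (simp add: harm_expand)
qed

lemma sum_inverse_power2_le: "1 \<le> n \<Longrightarrow> (\<Sum>j=1..n. 1 / (real j)\<^sup>2) \<le> 2 - 1 / real n"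
proof (induction n rule: dec_induct)
  case (step n)
  have "1 / (real (Suc n))\<^sup>2 \<le> 1 / (real n * real (Suc n))"
    using step.hyps by (intro divide_left_mono) (auto simp: power2_eq_square)
  also have "\<dots> = 1 / real n - 1 / real (Suc n)"
    using step.hyps by (simp add: field_simps)
  finally show ?case using step.IH by simp
qed simp

lemma prod_one_minus_le_exp_ln:
  assumes "0 \<le> a" "a \<le> 1"
  shows "(\<Prod>j\<in>{1..k}. 1 - a / real j) \<le> exp (- a * ln (real k + 1))"
proof -
  have "(\<Prod>j\<in>{1..k}. 1 - a / real j) \<le> (\<Prod>j\<in>{1..k}. exp (- (a / real j)))"
    using decay_prod_factor_bounds[OF assms] exp_ge_add_one_self assms
    by (intro prod_mono) (smt (verit) atLeastAtMost_iff)
  also have "\<dots> = exp (- (a * harm k))"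
    by (simp add: exp_sum[symmetric] harm_def sum_negf sum_distrib_left divide_inverse)
  also have "\<dots> \<le> exp (- a * ln (real k + 1))"
    using ln_le_harm[of k] assms by (simp add: mult_left_mono)
  finally show ?thesis .
qed

lemma decay_prod_ge_exp:
  assumes s: "0 \<le> s" "s \<le> 1/2" and T: "1 \<le> T"
  shows "exp (- (s * (1 + ln (real T)) + 4 * s\<^sup>2)) \<le> decay_prod s T"
proof -
  have harmonic: "(\<Sum>j\<in>{1..<T}. 1 / real j) \<le> 1 + ln (real T)"
  proof (cases "T = 1")
    case False
    then have "(\<Sum>j\<in>{1..<T}. 1 / real j) = harm (T - 1)"
      unfolding harm_def using T by (intro sum.cong) (auto simp: divide_inverse)
    also have "\<dots> \<le> 1 + ln (real (T - 1))"
      using T False by (intro harm_le_one_plus_ln) auto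
    also have "\<dots> \<le> 1 + ln (real T)"
      using T False by simp
    finally show ?thesis .
  qed simp
  have squares: "(\<Sum>j\<in>{1..<T}. 1 / (real j)\<^sup>2) \<le> 2"
  proof (cases "T = 1")
    case False
    then have "{1..<T} = {1..T - 1}" using T by auto
    then have "(\<Sum>j\<in>{1..<T}. 1 / (real j)\<^sup>2) \<le> 2 - 1 / real (T - 1)"
      using sum_inverse_power2_le[of "T - 1"] False T by simp
    moreover have "0 \<le> 1 / real (T - 1)" by simp
    ultimately show ?thesis by (smt (verit))
  qed simp
  have "exp (- (s * (1 + ln (real T)) + 4 * s\<^sup>2))
      \<le> exp (- (s * (\<Sum>j\<in>{1..<T}. 1 / real j) + 2 * s\<^sup>2 * (\<Sum>j\<in>{1..<T}. 1 / (real j)\<^sup>2)))"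
    using mult_left_mono[OF harmonic, of s] mult_left_mono[OF squares, of "2 * s\<^sup>2"] s by simp
  also have "\<dots> = (\<Prod>j\<in>{1..<T}. exp (- (s / real j) - 2 * (s / real j)\<^sup>2))"
    by (simp add: exp_sum[symmetric] sum_distrib_left sum.distrib sum_negf power_divide sum_subtractf)
  also have "\<dots> \<le> decay_prod s T"
    unfolding decay_prod_def
  proof (rule prod_mono)
    fix j assume "j \<in> {1..<T}"
    then have x: "0 \<le> s / real j" "s / real j \<le> 1/2"
      using s divide_left_mono[of 1 "real j" s] by auto
    then have "exp (- (s / real j) - 2 * (s / real j)\<^sup>2) \<le> exp (ln (1 - s / real j))"
      using ln_one_minus_pos_lower_bound[OF x] by simp
    then show "0 \<le> exp (- (s / real j) - 2 * (s / real j)\<^sup>2)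
        \<and> exp (- (s / real j) - 2 * (s / real j)\<^sup>2) \<le> 1 - s / real j"
      using x by simp
  qed
  finally show ?thesis .
qed

lemma sum_le_split_by_decreasing_weight:
  fixes w f g :: "nat \<Rightarrow> real"
  assumes w: "\<And>m. 0 \<le> w m" and f: "\<And>m. 0 \<le> f m" "\<And>m. f m \<le> 1"
    and g: "\<And>m. 0 \<le> g m" "0 < g T" "\<And>m. m < T \<Longrightarrow> g T \<le> g m"
    and tail: "\<And>m. T \<le> m \<Longrightarrow> f m \<le> E" and E: "0 \<le> E"
  shows "(\<Sum>m\<in>A. w m * f m) \<le> (\<Sum>m\<in>A. w m * g m) / g T + (\<Sum>m\<in>A. w m) * E"
proof -
  have "w m * f m \<le> w m * g m / g T + w m * E" for m
  proof (cases "m < T")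
    case True
    have "f m * g T \<le> g T"
      using mult_right_mono[OF f(2)[of m]] g(2) by simp
    then have "f m * g T \<le> g m"
      using g(3)[OF True] by linarith
    then have "f m \<le> g m / g T"
      by (simp add: pos_le_divide_eq[OF g(2)])
    then show ?thesis
      using mult_left_mono[OF _ w] w[of m] E by (smt (verit) mult_nonneg_nonneg times_divide_eq_right)
  next
    case False
    then have "w m * f m \<le> w m * E"
      using tail[of m] w[of m] by (simp add: mult_left_mono)
    moreover have "0 \<le> w m * g m / g T"
      using w[of m] g(1)[of m] g(2) by simp
    ultimately show ?thesis by linarith
  qed
  then have "(\<Sum>m\<in>A. w m * f m) \<le> (\<Sum>m\<in>A. w m * g m / g T + w m * E)"
    by (rule sum_mono)
  also have "\<dots> = (\<Sum>m\<in>A. w m * g m) / g T + (\<Sum>m\<in>A. w m) * E"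
    by (simp add: sum.distrib sum_divide_distrib sum_distrib_right)
  finally show ?thesis .
qed

lemma prod_div_decay_prod_le:
  fixes K :: real and T :: nat
  assumes p: "0 < p" "p < 1" and q: "0 < q" and K: "K = real (Suc k)"
    and T: "K powr q \<le> real T" "real T \<le> 2 * K powr q"
  shows "(\<Prod>j\<in>{1..k}. 1 - p * (1/2) / real j) / decay_prod (1/2) T
    \<le> exp (1/2 * (1 + ln 2) + 1) * K powr (- ((p - q) / 2))"
proof -
  have K1: "1 \<le> K" using K by simp
  have T1: "1 \<le> T"
    using T(1) ge_one_powr_ge_zero[OF K1, of q] q by linarith
  have numerator: "(\<Prod>j\<in>{1..k}. 1 - p * (1/2) / real j) \<le> exp (- (p * (1/2)) * ln K)"
    using prod_one_minus_le_exp_ln[of "p * (1/2)" k] p unfolding K by (simp add: add.commute)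
  have "ln (real T) \<le> ln (2 * K powr q)"
    using T(2) T1 by (intro ln_mono) auto
  also have "\<dots> = ln 2 + q * ln K"
    using K1 by (simp add: ln_mult)
  finally have "exp (- (1/2 * (1 + ln 2 + q * ln K) + 1)) \<le> exp (- (1/2 * (1 + ln (real T)) + 4 * (1/2)\<^sup>2))"
    by (simp add: power2_eq_square)
  also have "\<dots> \<le> decay_prod (1/2) T"
    by (rule decay_prod_ge_exp) (use T1 in auto)
  finally have denominator: "exp (- (1/2 * (1 + ln 2 + q * ln K) + 1)) \<le> decay_prod (1/2) T" .
  have "(\<Prod>j\<in>{1..k}. 1 - p * (1/2) / real j) / decay_prod (1/2) T
      \<le> exp (- (p * (1/2)) * ln K) / exp (- (1/2 * (1 + ln 2 + q * ln K) + 1))"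
    by (rule frac_le[OF _ numerator _ denominator]) auto
  also have "\<dots> = exp (1/2 * (1 + ln 2) + 1) * exp (- ((p - q) / 2) * ln K)"
    by (simp add: exp_diff[symmetric] exp_add[symmetric] algebra_simps) (simp add: field_simps)
  also have "\<dots> = exp (1/2 * (1 + ln 2) + 1) * K powr (- ((p - q) / 2))"
    using K1 by (simp add: powr_def)
  finally show ?thesis .
qed

lemma exp_neg_le_inverse:
  assumes "0 < (y::real)"
  shows "exp (- y) \<le> 1 / y"
proof -
  have "y \<le> exp y" using exp_ge_add_one_self[of y] by linarith
  then have "1 / exp y \<le> 1 / y" using assms by (intro divide_left_mono) auto
  then show ?thesis by (simp add: exp_minus field_simps)
qed

lemma exp_neg_powr_div_le:
  assumes "0 < c" "1 \<le> (K::real)"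
  shows "exp (- c * K powr r / K) \<le> 1 / c * K powr (- (r - 1))"
proof -
  have "c * K powr r / K = c * K powr (r - 1)"
    using assms(2) by (simp add: powr_diff)
  then have "exp (- c * K powr r / K) \<le> 1 / (c * K powr (r - 1))"
    using exp_neg_le_inverse[of "c * K powr (r - 1)"] assms by simp
  then show ?thesis
    by (simp only: powr_minus[of K "r - 1"]) (simp add: divide_inverse)
qed

lemma copies_mixture_le:
  fixes h :: "nat \<Rightarrow> real" and K :: real
  assumes p: "0 < p" "p < 1" and c: "0 < c" and q: "0 < q" "1 < q * \<alpha>"
    and h0: "\<And>m. 0 \<le> h m" and hc: "\<And>m. M0 \<le> m \<Longrightarrow> c * real m powr \<alpha> \<le> h m"
    and K: "K = real (Suc k)" and M0: "M0 \<le> nat \<lceil>K powr q\<rceil>"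
  shows "(\<Sum>m<k + 2. copies_pmf p k m * exp (- h m / K))
    \<le> exp (1/2 * (1 + ln 2) + 1) * K powr (- ((p - q) / 2)) + 1 / c * K powr (- (q * \<alpha> - 1))"
proof -
  define T where "T = nat \<lceil>K powr q\<rceil>"
  define E where "E = exp (- c * K powr (q * \<alpha>) / K)"
  have K1: "1 \<le> K" using K by simp
  have Kq: "1 \<le> K powr q" "K powr q \<le> real T" "real T \<le> 2 * K powr q"
    using ge_one_powr_ge_zero[OF K1, of q] q unfolding T_def by linarith+
  have \<alpha>: "0 \<le> \<alpha>"
    using q by (smt (verit) mult_nonneg_nonpos)
  have tail: "exp (- h m / K) \<le> E" if "T \<le> m" for m
  proof -
    have "K powr (q * \<alpha>) = (K powr q) powr \<alpha>" by (simp add: powr_powr)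
    also have "\<dots> \<le> real m powr \<alpha>"
      using Kq that \<alpha> by (intro powr_mono2) auto
    also have "c * \<dots> \<le> h m"
      using hc[of m] that M0 unfolding T_def by simp
    finally have "c * K powr (q * \<alpha>) \<le> h m" using c by simp
    then show ?thesis
      unfolding E_def using K1 by (simp add: divide_right_mono)
  qed
  have "(\<Sum>m<k + 2. copies_pmf p k m * exp (- h m / K))
      \<le> (\<Sum>m<k + 2. copies_pmf p k m * decay_prod (1/2) m) / decay_prod (1/2) T
        + (\<Sum>m<k + 2. copies_pmf p k m) * E"
    using p h0 K1 tail decay_prod_pos[of "1/2"] decay_prod_antimono[of "1/2"]
    by (intro sum_le_split_by_decreasing_weight copies_pmf_nonneg)
       (auto simp: E_def less_imp_le divide_nonneg_pos)
  also have "\<dots> = (\<Prod>j\<in>{1..k}. 1 - p * (1/2) / real j) / decay_prod (1/2) T + E"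
    by (simp only: sum_copies_pmf_decay_prod sum_copies_pmf mult_1)
  also have "\<dots> \<le> exp (1/2 * (1 + ln 2) + 1) * K powr (- ((p - q) / 2)) + 1 / c * K powr (- (q * \<alpha> - 1))"
    unfolding E_def
    by (intro add_mono prod_div_decay_prod_le[OF p q(1) K Kq(2,3)] exp_neg_powr_div_le c K1)
  finally show ?thesis .
qed

lemma tendsto_Suc_powr_neg: "0 < d \<Longrightarrow> (\<lambda>k. real (Suc k) powr (- d)) \<longlonglongrightarrow> 0"
  by (rule tendsto_neg_powr)
     (simp, subst filterlim_sequentially_Suc[of real], rule filterlim_real_sequentially)

lemma eventually_le_ceiling_Suc_powr:
  assumes "0 < q"
  shows "eventually (\<lambda>k. M0 \<le> nat \<lceil>real (Suc k) powr q\<rceil>) sequentially"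
proof (cases "M0 = 0")
  case False
  show ?thesis unfolding eventually_sequentially
  proof (intro exI allI impI)
    fix k assume "nat \<lceil>real M0 powr (1 / q)\<rceil> \<le> k"
    then have "real M0 powr (1 / q) \<le> real (Suc k)" by linarith
    then have "(real M0 powr (1 / q)) powr q \<le> real (Suc k) powr q"
      using assms by (intro powr_mono2) auto
    then show "M0 \<le> nat \<lceil>real (Suc k) powr q\<rceil>"
      using assms False by (simp add: powr_powr) linarith
  qed
qed simp

text \<open>Any exponent \<open>q \<in> (1/\<alpha>, p)\<close> works: copies beyond \<open>k\<^sup>q\<close> carry almost all the mass,
  and on them the exponent \<open>c m\<^sup>\<alpha> / k\<close> diverges.\<close>

lemma copies_mixture_tendsto_0:
  fixes h :: "nat \<Rightarrow> real"
  assumes p: "0 < p" "p < 1" and \<alpha>: "1 / p < \<alpha>" and c: "0 < c"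
    and h0: "\<And>m. 0 \<le> h m" and hc: "\<And>m. M0 \<le> m \<Longrightarrow> c * real m powr \<alpha> \<le> h m"
  shows "(\<lambda>k. \<Sum>m<k + 2. copies_pmf p k m * exp (- h m / real (Suc k))) \<longlonglongrightarrow> 0"
proof -
  have \<alpha>0: "0 < \<alpha>" using \<alpha> p by (smt (verit) divide_pos_pos)
  define q where "q = (1 / \<alpha> + p) / 2"
  have q: "0 < q" "q < p" "1 < q * \<alpha>"
    using \<alpha> \<alpha>0 p unfolding q_def by (auto simp: field_simps)
  define C :: real where "C = exp (1/2 * (1 + ln 2) + 1)"
  let ?u = "\<lambda>k. C * real (Suc k) powr (- ((p - q) / 2)) + 1 / c * real (Suc k) powr (- (q * \<alpha> - 1))"
  have "eventually (\<lambda>k. norm (\<Sum>m<k + 2. copies_pmf p k m * exp (- h m / real (Suc k))) \<le> ?u k) sequentially"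
    using eventually_le_ceiling_Suc_powr[OF q(1), of M0]
  proof eventually_elim
    case (elim k)
    have "0 \<le> (\<Sum>m<k + 2. copies_pmf p k m * exp (- h m / real (Suc k)))"
      using copies_pmf_nonneg p by (intro sum_nonneg) simp
    then show ?case
      using copies_mixture_le[OF p c q(1,3) h0 hc refl elim] unfolding C_def by simp
  qed
  moreover have "?u \<longlonglongrightarrow> C * 0 + 1 / c * 0"
    using q by (intro tendsto_intros tendsto_Suc_powr_neg) simp_all
  then have "?u \<longlonglongrightarrow> 0" by simp
  ultimately show ?thesis by (rule Lim_null_comparison)
qed

section \<open>The characteristic exponent\<close>

lemma lower_BG_index_gt_imp_powr_le:
  fixes \<Psi> :: "'d::euclidean_space \<Rightarrow> complex"
  assumes "ereal (1 / p) < lower_BG_index \<Psi>"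
  obtains \<alpha> b where "1 / p < \<alpha>" "\<And>\<theta>. b \<le> norm \<theta> \<Longrightarrow> norm \<theta> powr \<alpha> \<le> Re (\<Psi> \<theta>)"
proof -
  from assms obtain \<alpha> where \<alpha>: "1 / p < \<alpha>"
    and lim: "filterlim (\<lambda>\<theta>. norm \<theta> powr (- \<alpha>) * Re (\<Psi> \<theta>)) at_top at_infinity"
    unfolding lower_BG_index_def less_Sup_iff by auto
  then obtain b0 where b0: "\<And>\<theta>. b0 \<le> norm \<theta> \<Longrightarrow> 1 \<le> norm \<theta> powr (- \<alpha>) * Re (\<Psi> \<theta>)"
    unfolding filterlim_at_top eventually_at_infinity by blast
  have "norm \<theta> powr \<alpha> \<le> Re (\<Psi> \<theta>)" if "max b0 1 \<le> norm \<theta>" for \<theta>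
  proof -
    have "0 < norm \<theta>" using that by linarith
    have "norm \<theta> powr \<alpha> * 1 \<le> norm \<theta> powr \<alpha> * (norm \<theta> powr (- \<alpha>) * Re (\<Psi> \<theta>))"
      using b0[of \<theta>] that by (intro mult_left_mono) auto
    also have "\<dots> = Re (\<Psi> \<theta>)"
      using \<open>0 < norm \<theta>\<close> by (simp add: powr_minus field_simps)
    finally show ?thesis by simp
  qed
  then show ?thesis using that[OF \<alpha>] by blast
qed

lemma char_exponent_Re_nonneg:
  assumes "prob_space M" "char_exponent M \<xi> \<Psi>"
  shows "0 \<le> Re (\<Psi> \<theta>)"
proof -
  interpret prob_space M by fact
  have "(LINT x|M. cis (\<theta> \<bullet> \<xi> 1 x)) = exp (- (complex_of_real 1 * \<Psi> \<theta>))"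
    using assms(2) unfolding char_exponent_def by simp
  then have "norm (exp (- \<Psi> \<theta>)) = norm (LINT x|M. cis (\<theta> \<bullet> \<xi> 1 x))"
    by simp
  also have "\<dots> \<le> (LINT x|M. norm (cis (\<theta> \<bullet> \<xi> 1 x)))"
    by (rule integral_norm_bound)
  finally have "exp (- Re (\<Psi> \<theta>)) \<le> 1" by (simp add: prob_space)
  then show ?thesis by simp
qed

lemma integral_cis_skeleton_first_step:
  assumes "char_exponent M \<xi> \<Psi>" and "\<And>x. x \<in> space M \<Longrightarrow> \<xi> 0 x = 0"
  shows "(LINT x|M. cis (real m * (\<theta> \<bullet> skeleton_steps \<xi> n 1 x)))
    = exp (- (complex_of_real (1 / real n) * \<Psi> (real m *\<^sub>R \<theta>)))"
proof -
  have "(LINT x|M. cis (real m * (\<theta> \<bullet> skeleton_steps \<xi> n 1 x)))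
      = (LINT x|M. cis ((real m *\<^sub>R \<theta>) \<bullet> \<xi> (1 / real n) x))"
    using assms(2) by (intro Bochner_Integration.integral_cong) (simp_all add: skeleton_steps_def)
  also have "\<dots> = exp (- (complex_of_real (1 / real n) * \<Psi> (real m *\<^sub>R \<theta>)))"
    by (rule assms(1)[unfolded char_exponent_def, rule_format]) simp
  finally show ?thesis .
qed

lemma norm_char_srw_skeleton_le:
  assumes "srw_setting M p (skeleton_steps \<xi> (Suc k)) e U"
    and "char_exponent M \<xi> \<Psi>" "\<And>x. x \<in> space M \<Longrightarrow> \<xi> 0 x = 0"
  shows "norm (LINT x|M. cis (\<theta> \<bullet> srw (skeleton_steps \<xi> (Suc k)) e U (Suc k) x))
    \<le> (\<Sum>m<k + 2. copies_pmf p k m * exp (- Re (\<Psi> (real m *\<^sub>R \<theta>)) / real (Suc k)))"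
proof -
  interpret srw_setting M p "skeleton_steps \<xi> (Suc k)" e U by fact
  have "norm (LINT x|M. cis (\<theta> \<bullet> srw (skeleton_steps \<xi> (Suc k)) e U (Suc k) x))
      \<le> (\<Sum>m<Suc (Suc k). prob {x\<in>space M. first_step_copies (Suc k) x = m}
          * norm (LINT x|M. cis (real m * (\<theta> \<bullet> skeleton_steps \<xi> (Suc k) 1 x))))"
    by (rule norm_char_srw_le)
  also have "\<dots> = (\<Sum>m<k + 2. copies_pmf p k m * exp (- Re (\<Psi> (real m *\<^sub>R \<theta>)) / real (Suc k)))"
  proof (rule sum.cong)
    fix m
    show "prob {x\<in>space M. first_step_copies (Suc k) x = m}
        * norm (LINT x|M. cis (real m * (\<theta> \<bullet> skeleton_steps \<xi> (Suc k) 1 x)))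
        = copies_pmf p k m * exp (- Re (\<Psi> (real m *\<^sub>R \<theta>)) / real (Suc k))"
      using prob_first_step_copies[of k m] integral_cis_skeleton_first_step[OF assms(2,3), of m \<theta> "Suc k"]
      by (simp add: norm_exp_eq_Re)
  qed simp
  finally show ?thesis .
qed

lemma char_srw_skeleton_tendsto_0:
  fixes \<xi> :: "real \<Rightarrow> 'a \<Rightarrow> 'd::euclidean_space" and \<theta> :: 'd
  assumes levy: "levy_process M \<xi>" and exponent: "char_exponent M \<xi> \<Psi>"
    and p: "0 < p" "p < 1" and p_BG: "ereal (1 / p) < lower_BG_index \<Psi>"
    and rand: "\<And>n. n \<ge> 1 \<Longrightarrow> srw_randomness M p (skeleton_steps \<xi> n) (e n) (U n)"
    and \<theta>: "\<theta> \<noteq> 0"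
  shows "(\<lambda>n. LINT x|M. cis (\<theta> \<bullet> srw (skeleton_steps \<xi> n) (e n) (U n) n x)) \<longlonglongrightarrow> 0"
proof -
  have M: "prob_space M" "\<And>x. x \<in> space M \<Longrightarrow> \<xi> 0 x = 0"
    using levy by (simp_all add: levy_process_def)
  obtain \<alpha> b where \<alpha>: "1 / p < \<alpha>"
    and growth: "\<And>\<theta>'. b \<le> norm \<theta>' \<Longrightarrow> norm \<theta>' powr \<alpha> \<le> Re (\<Psi> \<theta>')"
    using lower_BG_index_gt_imp_powr_le[OF p_BG] by blast
  define h where "h m = Re (\<Psi> (real m *\<^sub>R \<theta>))" for m
  define M0 where "M0 = nat \<lceil>b / norm \<theta>\<rceil>"
  have h: "norm \<theta> powr \<alpha> * real m powr \<alpha> \<le> h m" if "M0 \<le> m" for m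
  proof -
    have "b / norm \<theta> \<le> real m"
      using that unfolding M0_def by linarith
    then have "b \<le> real m * norm \<theta>"
      using \<theta> by (simp add: divide_le_eq)
    then show ?thesis
      using growth[of "real m *\<^sub>R \<theta>"] by (simp add: h_def powr_mult mult.commute)
  qed
  have lim: "(\<lambda>k. \<Sum>m<k + 2. copies_pmf p k m * exp (- h m / real (Suc k))) \<longlonglongrightarrow> 0"
    by (rule copies_mixture_tendsto_0[OF p \<alpha> _ _ h])
       (use \<theta> char_exponent_Re_nonneg[OF M(1) exponent] in \<open>simp_all add: h_def\<close>)
  have bound: "\<forall>k. norm (LINT x|M. cis (\<theta> \<bullet> srw (skeleton_steps \<xi> (Suc k)) (e (Suc k)) (U (Suc k)) (Suc k) x))
      \<le> (\<Sum>m<k + 2. copies_pmf p k m * exp (- h m / real (Suc k)))"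
    using M rand unfolding h_def
    by (intro allI norm_char_srw_skeleton_le[OF _ exponent])
       (simp_all add: srw_setting_def srw_setting_axioms_def)
  have "(\<lambda>k. LINT x|M. cis (\<theta> \<bullet> srw (skeleton_steps \<xi> (Suc k)) (e (Suc k)) (U (Suc k)) (Suc k) x))
      \<longlonglongrightarrow> 0"
    by (rule Lim_null_comparison[OF always_eventually[OF bound] lim])
  then show ?thesis by (rule filterlim_sequentially_Suc[THEN iffD1])
qed

section \<open>Vanishing characteristic functions exclude convergence in distribution\<close>

lemma integral_cos_shrinking_tendsto_1:
  fixes \<mu> :: "'d::euclidean_space measure"
  assumes "prob_space \<mu>" "sets \<mu> = sets borel"
  shows "(\<lambda>j. LINT y|\<mu>. cos ((inverse (real (Suc j)) *\<^sub>R v) \<bullet> y)) \<longlonglongrightarrow> 1"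
proof -
  interpret prob_space \<mu> by fact
  have "(\<lambda>j. LINT y|\<mu>. cos ((inverse (real (Suc j)) *\<^sub>R v) \<bullet> y)) \<longlonglongrightarrow> (LINT y|\<mu>. 1)"
  proof (rule integral_dominated_convergence[where w="\<lambda>_. 1"])
    show "(\<lambda>y. cos ((inverse (real (Suc j)) *\<^sub>R v) \<bullet> y)) \<in> borel_measurable \<mu>" for j
      using assms(2) by (simp add: measurable_cong_sets[OF assms(2) refl])
    show "AE y in \<mu>. (\<lambda>j. cos ((inverse (real (Suc j)) *\<^sub>R v) \<bullet> y)) \<longlonglongrightarrow> 1"
    proof (rule AE_I2)
      fix y
      have "(\<lambda>j. cos (inverse (real (Suc j)) * (v \<bullet> y))) \<longlonglongrightarrow> cos (0 * (v \<bullet> y))"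
        by (intro tendsto_intros LIMSEQ_inverse_real_of_nat)
      then show "(\<lambda>j. cos ((inverse (real (Suc j)) *\<^sub>R v) \<bullet> y)) \<longlonglongrightarrow> 1" by simp
    qed
  qed simp_all
  then show ?thesis by (simp add: prob_space)
qed

lemma (in prob_space) integral_cos_limit_eq_0:
  fixes Y :: "nat \<Rightarrow> 'a \<Rightarrow> 'd::euclidean_space" and \<mu> :: "'d measure"
  assumes char: "(\<lambda>n. LINT x|M. cis (\<theta> \<bullet> Y n x)) \<longlonglongrightarrow> 0"
    and Y: "\<And>n. 1 \<le> n \<Longrightarrow> Y n \<in> borel_measurable M"
    and limit: "(\<lambda>n. LINT x|M. cos (\<theta> \<bullet> Y n x)) \<longlonglongrightarrow> (LINT y|\<mu>. cos (\<theta> \<bullet> y))"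
  shows "(LINT y|\<mu>. cos (\<theta> \<bullet> y)) = 0"
proof -
  have "Re (LINT x|M. cis (\<theta> \<bullet> Y n x)) = (LINT x|M. cos (\<theta> \<bullet> Y n x))" if "1 \<le> n" for n
  proof -
    have "integrable M (\<lambda>x. cis (\<theta> \<bullet> Y n x))"
      using Y[OF that] by (intro integrable_const_bound[where B=1]) simp_all
    then show ?thesis by (simp flip: integral_Re)
  qed
  then have "eventually (\<lambda>n. Re (LINT x|M. cis (\<theta> \<bullet> Y n x)) = (LINT x|M. cos (\<theta> \<bullet> Y n x))) sequentially"
    unfolding eventually_sequentially by blast
  moreover have "(\<lambda>n. Re (LINT x|M. cis (\<theta> \<bullet> Y n x))) \<longlonglongrightarrow> 0"
    using tendsto_Re[OF char] by simp
  ultimately have "(\<lambda>n. LINT x|M. cos (\<theta> \<bullet> Y n x)) \<longlonglongrightarrow> 0"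
    by (rule Lim_transform_eventually[rotated])
  with limit show ?thesis by (rule LIMSEQ_unique)
qed

lemma not_converges_in_distribution_if_char_tendsto_0:
  fixes Y :: "nat \<Rightarrow> 'a \<Rightarrow> 'd::euclidean_space"
  assumes "prob_space M"
    and char: "\<And>\<theta>. \<theta> \<noteq> 0 \<Longrightarrow> (\<lambda>n. LINT x|M. cis (\<theta> \<bullet> Y n x)) \<longlonglongrightarrow> 0"
    and Y: "\<And>n. 1 \<le> n \<Longrightarrow> Y n \<in> borel_measurable M"
  shows "\<not> converges_in_distribution M Y"
proof
  interpret prob_space M by fact
  assume "converges_in_distribution M Y"
  then obtain \<mu> where \<mu>: "prob_space \<mu>" "sets \<mu> = sets (borel :: 'd measure)"
    and conv: "\<And>f :: 'd \<Rightarrow> real. continuous_on UNIV f \<Longrightarrow> bounded (range f) \<Longrightarrow>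
           (\<lambda>n. LINT x|M. f (Y n x)) \<longlonglongrightarrow> integral\<^sup>L \<mu> f"
    unfolding converges_in_distribution_def by blast
  obtain v :: 'd where "v \<in> Basis" using nonempty_Basis by blast
  then have v: "v \<noteq> 0" by (rule nonzero_Basis)
  have "(LINT y|\<mu>. cos ((inverse (real (Suc j)) *\<^sub>R v) \<bullet> y)) = 0" for j
  proof (rule integral_cos_limit_eq_0[OF char Y])
    show "inverse (real (Suc j)) *\<^sub>R v \<noteq> 0" using v by simp
    show "(\<lambda>n. LINT x|M. cos ((inverse (real (Suc j)) *\<^sub>R v) \<bullet> Y n x))
        \<longlonglongrightarrow> (LINT y|\<mu>. cos ((inverse (real (Suc j)) *\<^sub>R v) \<bullet> y))"
      by (rule conv) (auto intro!: continuous_intros simp: bounded_iff intro: exI[of _ 1])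
  qed
  then have "(\<lambda>j. 0 :: real) \<longlonglongrightarrow> 1"
    using integral_cos_shrinking_tendsto_1[OF \<mu>, of v] by simp
  then show False
    using LIMSEQ_unique[OF tendsto_const] by fastforce
qed

theorem mainTheorem14:
  fixes M :: "'a measure"
    and \<xi> :: "real \<Rightarrow> 'a \<Rightarrow> 'd::euclidean_space"
    and \<Psi> :: "'d \<Rightarrow> complex"
    and p :: real
    and e :: "nat \<Rightarrow> nat \<Rightarrow> 'a \<Rightarrow> bool"
    and U :: "nat \<Rightarrow> nat \<Rightarrow> 'a \<Rightarrow> nat"
  assumes levy: "levy_process M \<xi>"
    and exponent: "char_exponent M \<xi> \<Psi>"
    and p: "0 < p" "p < 1"
    and p_BG: "ereal (1 / p) < lower_BG_index \<Psi>"
    and rand: "\<And>n. n \<ge> 1 \<Longrightarrow> srw_randomness M p (skeleton_steps \<xi> n) (e n) (U n)"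
  shows "(\<forall>\<theta>::'d. \<theta> \<noteq> 0 \<longrightarrow>
           (\<lambda>n. LINT x|M. cis (\<theta> \<bullet> srw (skeleton_steps \<xi> n) (e n) (U n) n x)) \<longlonglongrightarrow> 0)
         \<and> \<not> converges_in_distribution M (\<lambda>n. srw (skeleton_steps \<xi> n) (e n) (U n) n)"
proof -
  have M: "prob_space M"
    using levy by (simp add: levy_process_def)
  have char: "\<forall>\<theta>::'d. \<theta> \<noteq> 0 \<longrightarrow>
      (\<lambda>n. LINT x|M. cis (\<theta> \<bullet> srw (skeleton_steps \<xi> n) (e n) (U n) n x)) \<longlonglongrightarrow> 0"
    using char_srw_skeleton_tendsto_0[OF levy exponent p p_BG rand] by blast
  have "srw (skeleton_steps \<xi> n) (e n) (U n) n \<in> borel_measurable M" if "1 \<le> n" for n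
  proof -
    interpret srw_setting M p "skeleton_steps \<xi> n" "e n" "U n"
      using M rand[OF that] by (simp add: srw_setting_def srw_setting_axioms_def)
    show ?thesis by (rule measurable_srw)
  qed
  then have "\<not> converges_in_distribution M (\<lambda>n. srw (skeleton_steps \<xi> n) (e n) (U n) n)"
    using char by (intro not_converges_in_distribution_if_char_tendsto_0[OF M]) auto
  with char show ?thesis ..
qed

end
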